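(* Let $A:\mathbb{R}^d\rightrightarrows\mathbb{R}^d$ be maximal monotone with $A^{-1}(0)\neq\emptyset$, let $p\geq1$ be an integer, $\sigma\in(0,1)$, $\theta>0$, $x_0\in\mathbb{R}^d$, and suppose $\lambda_k>0$, $y_k,v_k,x_k\in\mathbb{R}^d$, $\epsilon_k\geq0$ satisfy for every $k\geq0$: $v_{k+1}\in A^{\epsilon_{k+1}}(y_{k+1})$, $\|\lambda_{k+1}v_{k+1}+y_{k+1}-x_k\|^2+2\lambda_{k+1}\epsilon_{k+1}\leq\sigma^2\|y_{k+1}-x_k\|^2$, $\lambda_{k+1}\|y_{k+1}-x_k\|^{p-1}\geq\theta$, and $x_{k+1}=x_k-\lambda_{k+1}v_{k+1}$. For $z\in\mathbb{R}^d$ let $\mathcal{E}_k=\frac12\|x_k-z\|^2$. Then for every integer $k\geq1$, \[ \sum_{i=1}^k\lambda_i\langle v,y_i-z\rangle+\frac{1-\sigma^2}{2}\sum_{i=1}^k\|x_{i-1}-y_i\|^2\leq\mathcal{E}_0-\mathcal{E}_k\quad\text{for all }v\in Az. \] Consequently, with $\tilde y_k=\frac1{\sum_{i=1}^k\lambda_i}\sum_{i=1}^k\lambda_iy_i$, $\sup_{v\in Az}\langle v,\tilde y_k-z\rangle\leq\frac{\mathcal{E}_0}{\sum_{i=1}^k\lambda_i}$, and, since $\sigma<1$, $\sum_{i=1}^k\|x_{i-1}-y_i\|^2\leq\frac{\|x_0-z^\star\|^2}{1-\sigma^2}$ for any $z^\star\in A^{-1}(0)$.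
   Context: The $\epsilon$-enlargement is $A^{\epsilon}(x)=\{v\in\mathbb{R}^d:\langle x-\tilde x,v-\tilde v\rangle\geq-\epsilon\ \forall\tilde x\in\mathbb{R}^d,\ \forall\tilde v\in A\tilde x\}$. *)

theory Defs
  imports "HOL-Analysis.Analysis"
begin

definition monotone_op :: "('a::real_inner \<Rightarrow> 'a set) \<Rightarrow> bool" where
  "monotone_op A \<longleftrightarrow> (\<forall>x y u w. u \<in> A x \<longrightarrow> w \<in> A y \<longrightarrow> inner (x - y) (u - w) \<ge> 0)"

definition maximal_monotone :: "('a::real_inner \<Rightarrow> 'a set) \<Rightarrow> bool" where
  "maximal_monotone A \<longleftrightarrow> monotone_op A \<and>
     (\<forall>B. monotone_op B \<and> (\<forall>x. A x \<subseteq> B x) \<longrightarrow> B = A)"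

definition enlargement :: "('a::real_inner \<Rightarrow> 'a set) \<Rightarrow> real \<Rightarrow> 'a \<Rightarrow> 'a set" where
  "enlargement A \<epsilon> x = {w. \<forall>x' w'. w' \<in> A x' \<longrightarrow> inner (x - x') (w - w') \<ge> - \<epsilon>}"

end

theory Submission
  imports Defs
begin

text \<open>With \<open>x' = x - \<lambda> v\<close>, the energy drop \<open>\<parallel>x - z\<parallel>\<^sup>2/2 - \<parallel>x' - z\<parallel>\<^sup>2/2\<close> equals
  \<open>\<lambda> \<langle>v, y - z\<rangle> + (\<parallel>x - y\<parallel>\<^sup>2 - \<parallel>\<lambda> v + y - x\<parallel>\<^sup>2)/2\<close>. For \<open>w \<in> A z\<close> the enlargement bounds the
  first term below by \<open>\<lambda> \<langle>w, y - z\<rangle> - \<lambda> \<epsilon>\<close>, and the relative error criterion bounds the second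
  below by \<open>(1 - \<sigma>\<^sup>2) \<parallel>x - y\<parallel>\<^sup>2/2 + \<lambda> \<epsilon>\<close>, so the \<open>\<lambda> \<epsilon>\<close> terms cancel. Summing over the
  iterations telescopes; the other claims follow by dropping nonnegative terms and dividing
  by \<open>\<Sum> \<lambda>\<^sub>i\<close>.\<close>

lemma norm_sq_diff_step_identity:
  fixes x y z u :: "'a::real_inner"
  shows "(norm (x - z))\<^sup>2 - (norm (x - u - z))\<^sup>2
           = 2 * inner u (y - z) + (norm (x - y))\<^sup>2 - (norm (u + y - x))\<^sup>2"
  by (simp add: power2_norm_eq_inner inner_simps inner_commute algebra_simps)

lemma enlargement_inner_diff_ge:
  assumes "v \<in> enlargement A \<epsilon> y" and "w \<in> A z"
  shows "inner w (y - z) - \<epsilon> \<le> inner v (y - z)"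
proof -
  have "- \<epsilon> \<le> inner (y - z) (v - w)"
    using assms unfolding enlargement_def by blast
  then show ?thesis
    by (simp add: inner_diff_right inner_commute)
qed

lemma hpe_step_energy_decrease:
  fixes x y v z w :: "'a::real_inner" and lam \<epsilon> \<sigma> :: real
  assumes lam: "lam > 0"
    and incl: "v \<in> enlargement A \<epsilon> y" and w: "w \<in> A z"
    and err: "(norm (lam *\<^sub>R v + y - x))\<^sup>2 + 2 * lam * \<epsilon> \<le> \<sigma>\<^sup>2 * (norm (y - x))\<^sup>2"
  shows "lam * inner w (y - z) + (1 - \<sigma>\<^sup>2) / 2 * (norm (x - y))\<^sup>2
           \<le> (1/2) * (norm (x - z))\<^sup>2 - (1/2) * (norm (x - lam *\<^sub>R v - z))\<^sup>2"
proof -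
  have "lam * inner w (y - z) - lam * \<epsilon> \<le> lam * inner v (y - z)"
    using enlargement_inner_diff_ge[OF incl w] lam by (simp flip: right_diff_distrib)
  moreover have "(norm (x - z))\<^sup>2 - (norm (x - lam *\<^sub>R v - z))\<^sup>2
      = 2 * (lam * inner v (y - z)) + (norm (x - y))\<^sup>2 - (norm (lam *\<^sub>R v + y - x))\<^sup>2"
    using norm_sq_diff_step_identity[of x z "lam *\<^sub>R v" y] by simp
  moreover have "(1 - \<sigma>\<^sup>2) / 2 * (norm (x - y))\<^sup>2
      = (norm (x - y))\<^sup>2 / 2 - \<sigma>\<^sup>2 * (norm (x - y))\<^sup>2 / 2"
    by (simp add: diff_divide_distrib left_diff_distrib)
  ultimately show ?thesis
    using err unfolding norm_minus_commute[of y x] by linarith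
qed

lemma inner_weighted_average_diff:
  fixes y :: "'b \<Rightarrow> 'a::real_inner" and lam :: "'b \<Rightarrow> real"
  assumes "sum lam I \<noteq> 0"
  shows "sum lam I * inner w ((1 / sum lam I) *\<^sub>R (\<Sum>i\<in>I. lam i *\<^sub>R y i) - z)
           = (\<Sum>i\<in>I. lam i * inner w (y i - z))"
proof -
  have "sum lam I * inner w ((1 / sum lam I) *\<^sub>R (\<Sum>i\<in>I. lam i *\<^sub>R y i) - z)
      = inner w (\<Sum>i\<in>I. lam i *\<^sub>R y i) - sum lam I * inner w z"
    using assms by (simp add: inner_diff_right right_diff_distrib)
  also have "\<dots> = (\<Sum>i\<in>I. lam i * inner w (y i - z))"
    by (simp add: inner_sum_right inner_diff_right right_diff_distrib sum_subtractf
        sum_distrib_right)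
  finally show ?thesis .
qed

locale hpe_iteration =
  fixes A :: "'a::real_inner \<Rightarrow> 'a set"
    and lam eps :: "nat \<Rightarrow> real"
    and x y v :: "nat \<Rightarrow> 'a"
    and \<sigma> :: real
  assumes lam_pos: "\<And>k. lam (Suc k) > 0"
    and incl: "\<And>k. v (Suc k) \<in> enlargement A (eps (Suc k)) (y (Suc k))"
    and err: "\<And>k. (norm (lam (Suc k) *\<^sub>R v (Suc k) + y (Suc k) - x k))\<^sup>2
                    + 2 * lam (Suc k) * eps (Suc k) \<le> \<sigma>\<^sup>2 * (norm (y (Suc k) - x k))\<^sup>2"
    and upd: "\<And>k. x (Suc k) = x k - lam (Suc k) *\<^sub>R v (Suc k)"
begin

lemma energy_estimate:
  assumes w: "w \<in> A z"
  shows "(\<Sum>i=1..n. lam i * inner w (y i - z))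
           + (1 - \<sigma>\<^sup>2) / 2 * (\<Sum>i=1..n. (norm (x (i - 1) - y i))\<^sup>2)
         \<le> (1/2) * (norm (x 0 - z))\<^sup>2 - (1/2) * (norm (x n - z))\<^sup>2"
proof (induction n)
  case 0
  then show ?case by simp
next
  case (Suc n)
  have "lam (Suc n) * inner w (y (Suc n) - z) + (1 - \<sigma>\<^sup>2) / 2 * (norm (x n - y (Suc n)))\<^sup>2
      \<le> (1/2) * (norm (x n - z))\<^sup>2 - (1/2) * (norm (x (Suc n) - z))\<^sup>2"
    unfolding upd[of n] by (rule hpe_step_energy_decrease[OF lam_pos incl w err])
  with Suc.IH show ?case
    by (simp add: distrib_left)
qed

lemma lam_sum_pos:
  assumes "k \<ge> 1"
  shows "(\<Sum>i=1..k. lam i) > 0"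
  using assms lam_pos by (intro sum_pos) (auto simp: Suc_le_eq gr0_conv_Suc)

lemma ergodic_bound:
  assumes "\<sigma>\<^sup>2 \<le> 1" and "k \<ge> 1" and w: "w \<in> A z"
  shows "inner w ((1 / (\<Sum>i=1..k. lam i)) *\<^sub>R (\<Sum>i=1..k. lam i *\<^sub>R y i) - z)
           \<le> (1/2) * (norm (x 0 - z))\<^sup>2 / (\<Sum>i=1..k. lam i)"
proof -
  have "0 \<le> (1 - \<sigma>\<^sup>2) / 2 * (\<Sum>i=1..k. (norm (x (i - 1) - y i))\<^sup>2)"
    using assms(1) by (simp add: sum_nonneg)
  then have "(\<Sum>i=1..k. lam i * inner w (y i - z)) \<le> (1/2) * (norm (x 0 - z))\<^sup>2"
    using energy_estimate[OF w, of k] zero_le_power2[of "norm (x k - z)"] by linarith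
  then show ?thesis
    using lam_sum_pos[OF assms(2)] inner_weighted_average_diff[of lam "{1..k}" w y z]
    by (simp add: pos_le_divide_eq mult.commute)
qed

lemma residual_sum_bound:
  assumes "\<sigma>\<^sup>2 < 1" and "0 \<in> A zs"
  shows "(\<Sum>i=1..k. (norm (x (i - 1) - y i))\<^sup>2) \<le> (norm (x 0 - zs))\<^sup>2 / (1 - \<sigma>\<^sup>2)"
proof -
  have "(1 - \<sigma>\<^sup>2) * (\<Sum>i=1..k. (norm (x (i - 1) - y i))\<^sup>2)
      \<le> (norm (x 0 - zs))\<^sup>2 - (norm (x k - zs))\<^sup>2"
    using energy_estimate[OF assms(2), of k] by simp
  also have "\<dots> \<le> (norm (x 0 - zs))\<^sup>2"
    by simp
  finally show ?thesis
    using assms(1) by (simp add: pos_le_divide_eq mult.commute)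
qed

end

theorem lemma4p1:
  fixes A :: "'a::euclidean_space \<Rightarrow> 'a set"
    and p :: nat and \<sigma> \<theta> :: real
    and lam eps :: "nat \<Rightarrow> real"
    and x y v :: "nat \<Rightarrow> 'a"
  assumes maxmon: "maximal_monotone A"
    and zeros: "\<exists>z. 0 \<in> A z"
    and p: "p \<ge> 1"
    and sigma: "0 < \<sigma>" "\<sigma> < 1"
    and theta: "\<theta> > 0"
    and lam_pos: "\<And>k. lam (Suc k) > 0"
    and eps_nonneg: "\<And>k. eps (Suc k) \<ge> 0"
    and incl: "\<And>k. v (Suc k) \<in> enlargement A (eps (Suc k)) (y (Suc k))"
    and err: "\<And>k. (norm (lam (Suc k) *\<^sub>R v (Suc k) + y (Suc k) - x k))\<^sup>2
                    + 2 * lam (Suc k) * eps (Suc k) \<le> \<sigma>\<^sup>2 * (norm (y (Suc k) - x k))\<^sup>2"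
    and large: "\<And>k. lam (Suc k) * norm (y (Suc k) - x k) ^ (p - 1) \<ge> \<theta>"
    and upd: "\<And>k. x (Suc k) = x k - lam (Suc k) *\<^sub>R v (Suc k)"
  shows "\<forall>z k. k \<ge> 1 \<longrightarrow>
           (let E = (\<lambda>j. (1/2) * (norm (x j - z))\<^sup>2);
                ytil = (1 / (\<Sum>i=1..k. lam i)) *\<^sub>R (\<Sum>i=1..k. lam i *\<^sub>R y i) in
            (\<forall>w\<in>A z. (\<Sum>i=1..k. lam i * inner w (y i - z))
                 + (1 - \<sigma>\<^sup>2) / 2 * (\<Sum>i=1..k. (norm (x (i - 1) - y i))\<^sup>2) \<le> E 0 - E k)
          \<and> (\<forall>w\<in>A z. inner w (ytil - z) \<le> E 0 / (\<Sum>i=1..k. lam i))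
          \<and> (\<forall>zs. 0 \<in> A zs \<longrightarrow>
                (\<Sum>i=1..k. (norm (x (i - 1) - y i))\<^sup>2) \<le> (norm (x 0 - zs))\<^sup>2 / (1 - \<sigma>\<^sup>2)))"
proof -
  interpret hpe_iteration A lam eps x y v \<sigma>
    using lam_pos incl err upd by unfold_locales
  have "\<sigma>\<^sup>2 < 1"
    using sigma by (simp add: power_less_one_iff)
  then show ?thesis
    using energy_estimate ergodic_bound residual_sum_bound unfolding Let_def
    by (simp add: less_imp_le)
qed

end
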